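(* For all sufficiently large integers $m$, there exists a $256$-regular bipartite graph $H$ with bipartition $(A,B)$, $|A|=|B|=7m$, together with sets $A'\subseteq A$, $B'\subseteq B$ with $|A'|=|B'|=2m$, such that for all $X\subseteq A'$ and $Y\subseteq B'$ with $|X|=|Y|\le m$, the graph $H-(X\cup Y)$ has a perfect matching. *)

theory Defs
  imports Main
begin

definition bip_graph :: "'a set \<Rightarrow> 'a set \<Rightarrow> ('a \<times> 'a) set \<Rightarrow> bool" where
  "bip_graph A B E \<longleftrightarrow> A \<inter> B = {} \<and> finite A \<and> finite B \<and> E \<subseteq> A \<times> B"

definition bip_regular :: "nat \<Rightarrow> 'a set \<Rightarrow> 'a set \<Rightarrow> ('a \<times> 'a) set \<Rightarrow> bool" where
  "bip_regular d A B E \<longleftrightarrow>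
     (\<forall>a\<in>A. card {b\<in>B. (a, b) \<in> E} = d) \<and> (\<forall>b\<in>B. card {a\<in>A. (a, b) \<in> E} = d)"

text \<open>The subgraph induced on A' \<union> B' (i.e. H minus the other vertices) has a perfect
  matching: a set of edges of H between A' and B' covering every vertex of A' and of B'
  exactly once.\<close>
definition bip_has_perfect_matching :: "'a set \<Rightarrow> 'a set \<Rightarrow> ('a \<times> 'a) set \<Rightarrow> bool" where
  "bip_has_perfect_matching A' B' E \<longleftrightarrow>
     (\<exists>M. M \<subseteq> E \<inter> (A' \<times> B') \<and>
          (\<forall>a\<in>A'. \<exists>!b. (a, b) \<in> M) \<and> (\<forall>b\<in>B'. \<exists>!a. (a, b) \<in> M))"

end

theory Submission
  imports Defs Complex_Main
begin

text \<open>On each side of the bipartite graph, 2m deletable vertices are followed by a core of 5m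
  vertices. The base graph is the union of the graphs of 80 bijections A \<rightarrow> B and of 16 maps that
  send one side at most 2-to-1 into the core of the other (injections into 10m points, reduced
  modulo 5m). A first-moment count shows that the bijections can be chosen to join any two sets of
  more than m vertices with more than 6m vertices in total, and the 2-to-1 maps so that every set
  of at most m vertices has at least as many neighbours in the opposite core. Every vertex has fewer
  than 256 base edges and 256 * 256 \<le> 7m, so adding edges, and switching one edge for two when
  two deficient vertices are already adjacent, completes the base graph to a 256-regular one.
  After deleting X and Y, a set S violating Hall's condition and the set T of vertices not
  adjacent to S satisfy |S| + |T| > |A - X|, which neither the expansion of small sets nor the
  connection of large ones allows.\<close>

section \<open>Falling factorials\<close>

fun ffact :: "nat \<Rightarrow> nat \<Rightarrow> nat" where
  "ffact x 0 = 1"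
| "ffact x (Suc k) = x * ffact (x - 1) k"

lemma ffact_Suc_right: "ffact x (Suc k) = ffact x k * (x - k)"
proof (induction k arbitrary: x)
  case 0 then show ?case by simp
next
  case (Suc k)
  have "ffact x (Suc (Suc k)) = x * ffact (x - 1) (Suc k)" by simp
  also have "\<dots> = x * (ffact (x - 1) k * (x - 1 - k))" by (simp only: Suc.IH)
  also have "\<dots> = ffact x (Suc k) * (x - Suc k)"
    by (simp only: ffact.simps mult.assoc diff_Suc_eq_diff_pred)
  finally show ?case .
qed

lemma ffact_eq_0: "x < k \<Longrightarrow> ffact x k = 0"
  by (induction k arbitrary: x) (auto simp: less_Suc_eq_0_disj)

lemma ffact_pos: "k \<le> x \<Longrightarrow> 0 < ffact x k"
  by (induction k arbitrary: x) auto

lemma ffact_split: "s \<le> u \<Longrightarrow> ffact v u = ffact v s * ffact (v - s) (u - s)"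
proof (induction s arbitrary: v u)
  case 0 then show ?case by simp
next
  case (Suc s)
  then obtain u' where u: "u = Suc u'" by (cases u) auto
  have "ffact v u = v * ffact (v - 1) u'" by (simp add: u)
  also have "\<dots> = v * (ffact (v - 1) s * ffact (v - 1 - s) (u' - s))"
    using Suc.IH[of u' "v - 1"] Suc.prems u by simp
  also have "\<dots> = ffact v (Suc s) * ffact (v - Suc s) (u - Suc s)"
    by (simp add: u)
  finally show ?case .
qed

lemma ffact_cross_le: "w \<le> v \<Longrightarrow> ffact w s * v ^ s \<le> ffact v s * w ^ s"
proof (induction s)
  case 0 then show ?case by simp
next
  case (Suc s)
  have "(w - s) * v = w * v - s * v" by (simp add: diff_mult_distrib)
  moreover have "(v - s) * w = w * v - s * w" by (metis diff_mult_distrib mult.commute)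
  moreover have "s * w \<le> s * v" using Suc.prems by simp
  ultimately have "(w - s) * v \<le> (v - s) * w" by (simp add: diff_le_mono2)
  with Suc have "(ffact w s * v ^ s) * ((w - s) * v) \<le> (ffact v s * w ^ s) * ((v - s) * w)"
    by (simp add: mult_le_mono)
  then show ?case by (simp only: ffact_Suc_right power_Suc mult_ac)
qed

lemma ffact_ratio_le:
  assumes "w \<le> v" "s \<le> v" "0 < v"
  shows "real (ffact w s) / real (ffact v s) \<le> (real w / real v) ^ s"
proof -
  have "real (ffact w s) * real v ^ s \<le> real (ffact v s) * real w ^ s"
    using ffact_cross_le[OF assms(1), of s] by (metis of_nat_le_iff of_nat_mult of_nat_power)
  then show ?thesis using ffact_pos[OF assms(2)] assms(3) by (simp add: field_simps)
qed

lemma ffact_Suc_split: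
  assumes "w \<le> v"
  shows "w * ffact (w - 1) s + (v - w) * ffact w s = ffact w s * (v - s)"
proof (cases "s \<le> w")
  case True
  have "w * ffact (w - 1) s = ffact w s * (w - s)" using ffact_Suc_right[of w s] by simp
  moreover have "(w - s) + (v - w) = v - s" using True assms by simp
  ultimately show ?thesis by (metis add_mult_distrib2 mult.commute)
next
  case False
  then show ?thesis using ffact_eq_0[of w s] ffact_eq_0[of w "Suc s"] by simp
qed

section \<open>Counting injections with constraints\<close>

text \<open>A list of length u without repetitions over V encodes an injection {..<u} \<rightarrow> V.\<close>

definition constrained_lists :: "nat \<Rightarrow> 'a set \<Rightarrow> nat set \<Rightarrow> 'a set \<Rightarrow> 'a list set" where
  "constrained_lists u V S W =
     {xs. length xs = u \<and> distinct xs \<and> set xs \<subseteq> V \<and> (\<forall>i\<in>S. xs ! i \<in> W)}"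

abbreviation inj_lists :: "nat \<Rightarrow> 'a set \<Rightarrow> 'a list set" where
  "inj_lists u V \<equiv> constrained_lists u V {} V"

lemma inj_listsD:
  assumes "xs \<in> inj_lists u V"
  shows "length xs = u" "distinct xs" "set xs \<subseteq> V" "\<And>i. i < u \<Longrightarrow> xs ! i \<in> V"
  using assms by (auto simp: constrained_lists_def)

lemma finite_constrained_lists: "finite V \<Longrightarrow> finite (constrained_lists u V S W)"
  by (rule finite_subset[OF _ finite_lists_length_eq[of V u]]) (auto simp: constrained_lists_def)

lemma constrained_lists_Suc:
  assumes "W \<subseteq> V" "S \<subseteq> {..<Suc u}"
  shows "constrained_lists (Suc u) V S W =
           (\<lambda>(x, xs). x # xs) `
             (SIGMA x:(if 0 \<in> S then W else V).
                constrained_lists u (V - {x}) {i. Suc i \<in> S} (W - {x}))"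
    (is "?L = (\<lambda>(x, xs). x # xs) ` (SIGMA x:?X. ?R x)")
proof (rule set_eqI, rule iffI)
  fix ys assume "ys \<in> ?L"
  then obtain x xs where ys: "ys = x # xs" and l: "length xs = u" and d: "distinct (x # xs)"
    and s: "set (x # xs) \<subseteq> V" and w: "\<forall>i\<in>S. (x # xs) ! i \<in> W"
    unfolding constrained_lists_def by (cases ys) auto
  have "x \<in> ?X" using s w by auto
  moreover have "xs ! i \<in> W - {x}" if "Suc i \<in> S" for i
  proof -
    have "i < u" using that assms(2) by auto
    then show ?thesis using that l d w nth_mem[of i xs] by fastforce
  qed
  then have "xs \<in> ?R x"
    using l d s by (auto simp: constrained_lists_def)
  ultimately show "ys \<in> (\<lambda>(x, xs). x # xs) ` (SIGMA x:?X. ?R x)"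
    using ys by auto
next
  fix ys assume "ys \<in> (\<lambda>(x, xs). x # xs) ` (SIGMA x:?X. ?R x)"
  then obtain x xs where ys: "ys = x # xs" and x: "x \<in> ?X" and xs: "xs \<in> ?R x"
    by auto
  have "ys ! i \<in> W" if "i \<in> S" for i
    using that x xs ys by (cases i) (auto simp: constrained_lists_def split: if_splits)
  then show "ys \<in> ?L"
    using xs x assms ys by (auto simp: constrained_lists_def split: if_splits)
qed

lemma sum_ffact_card_remove:
  assumes "finite V" "W \<subseteq> V"
  shows "(\<Sum>x\<in>W. ffact (card (W - {x})) s) = ffact (card W) (Suc s)"
    and "(\<Sum>x\<in>V. ffact (card (W - {x})) s) = ffact (card W) s * (card V - s)"
proof -
  have finW: "finite W" using assms finite_subset by blast
  then show "(\<Sum>x\<in>W. ffact (card (W - {x})) s) = ffact (card W) (Suc s)" by simp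
  have "(\<Sum>x\<in>V. ffact (card (W - {x})) s)
      = (\<Sum>x\<in>W. ffact (card (W - {x})) s) + (\<Sum>x\<in>V - W. ffact (card (W - {x})) s)"
    unfolding sum.subset_diff[OF assms(2,1)] by (rule add.commute)
  also have "\<dots> = card W * ffact (card W - 1) s + (card V - card W) * ffact (card W) s"
  proof -
    have "(\<Sum>x\<in>V - W. ffact (card (W - {x})) s) = (\<Sum>x\<in>V - W. ffact (card W) s)"
      by (intro sum.cong) auto
    then show ?thesis using finW card_Diff_subset[OF finW assms(2)] by simp
  qed
  also have "\<dots> = ffact (card W) s * (card V - s)"
    using ffact_Suc_split card_mono[OF assms] by blast
  finally show "(\<Sum>x\<in>V. ffact (card (W - {x})) s) = ffact (card W) s * (card V - s)" .
qed

lemma card_constrained_lists: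
  assumes "finite V" "W \<subseteq> V" "S \<subseteq> {..<u}"
  shows "card (constrained_lists u V S W)
       = ffact (card W) (card S) * ffact (card V - card S) (u - card S)"
  using assms
proof (induction u arbitrary: S V W)
  case 0
  then have "S = {}" by auto
  moreover have "constrained_lists 0 V {} W = {[]}" by (auto simp: constrained_lists_def)
  ultimately show ?case by simp
next
  case (Suc u)
  define S' where "S' = {i. Suc i \<in> S}"
  define X where "X = (if 0 \<in> S then W else V)"
  define w v s where "w = card W" and "v = card V" and "s = card S'"
  define R where "R = ffact (v - 1 - s) (u - s)"
  have S'u: "S' \<subseteq> {..<u}" using Suc.prems(3) by (auto simp: S'_def)
  have S_eq: "S = Suc ` S' \<union> (if 0 \<in> S then {0} else {})"
  proof (rule set_eqI)
    fix i show "i \<in> S \<longleftrightarrow> i \<in> Suc ` S' \<union> (if 0 \<in> S then {0} else {})"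
      by (cases i) (auto simp: S'_def)
  qed
  have cS: "card S = s + (if 0 \<in> S then 1 else 0)"
    using finite_subset[OF S'u] by (subst S_eq) (auto simp: s_def card_image)
  have su: "s \<le> u" using card_mono[OF _ S'u] by (simp add: s_def)
  have finX: "finite X" using Suc.prems finite_subset by (auto simp: X_def)
  have inj: "inj_on (\<lambda>(x, xs). x # xs) A" for A :: "('a \<times> 'a list) set"
    by (rule inj_onI) auto
  have "card (constrained_lists (Suc u) V S W)
      = (\<Sum>x\<in>X. card (constrained_lists u (V - {x}) S' (W - {x})))"
    unfolding constrained_lists_Suc[OF Suc.prems(2,3)] S'_def[symmetric] X_def[symmetric]
    using finX Suc.prems(1) by (simp add: card_image[OF inj] finite_constrained_lists)
  also have "\<dots> = (\<Sum>x\<in>X. ffact (card (W - {x})) s * R)"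
  proof (rule sum.cong[OF refl])
    fix x assume "x \<in> X"
    then have "x \<in> V" using Suc.prems(2) by (auto simp: X_def split: if_splits)
    then show "card (constrained_lists u (V - {x}) S' (W - {x})) = ffact (card (W - {x})) s * R"
      using Suc.IH[of "V - {x}" "W - {x}" S'] Suc.prems S'u
      by (auto simp: R_def s_def v_def)
  qed
  also have "\<dots> = (\<Sum>x\<in>X. ffact (card (W - {x})) s) * R" by (simp add: sum_distrib_right)
  also have "\<dots> = ffact w (card S) * ffact (v - card S) (Suc u - card S)"
  proof (cases "0 \<in> S")
    case True
    then show ?thesis
      using sum_ffact_card_remove(1)[OF Suc.prems(1,2)] cS by (simp add: X_def R_def w_def)
  next
    case False
    then show ?thesis
      using sum_ffact_card_remove(2)[OF Suc.prems(1,2)] cS su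
      by (simp add: X_def R_def w_def v_def Suc_diff_le)
  qed
  finally show ?case by (simp add: w_def v_def)
qed

section \<open>Families of injections avoiding bad configurations\<close>

text \<open>The ratio in the hypothesis is the probability that a uniformly random injection maps S
  into W, so the hypothesis is the union bound for D independent random injections.\<close>

lemma exists_family_avoiding:
  fixes Bad :: "(nat set \<times> 'a set) set"
  assumes V: "finite V" and uv: "u \<le> card V" and finB: "finite Bad"
    and Bad: "\<And>S W. (S, W) \<in> Bad \<Longrightarrow> S \<subseteq> {..<u} \<and> W \<subseteq> V"
    and union_bound:
      "(\<Sum>(S, W)\<in>Bad. (real (ffact (card W) (card S)) / real (ffact (card V) (card S))) ^ D) < 1"
  shows "\<exists>Fs. length Fs = D \<and> set Fs \<subseteq> inj_lists u V \<and>
           (\<forall>(S, W)\<in>Bad. \<exists>f\<in>set Fs. \<exists>i\<in>S. f ! i \<notin> W)"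
proof -
  define Fam where "Fam = {Fs. set Fs \<subseteq> inj_lists u V \<and> length Fs = D}"
  define BF where "BF = (\<lambda>(S, W). {Fs. set Fs \<subseteq> constrained_lists u V S W \<and> length Fs = D})"
  define N where "N = real (ffact (card V) u) ^ D"
  have N_pos: "N > 0" using ffact_pos[OF uv] by (simp add: N_def)
  have card_Fam: "real (card Fam) = N"
    using card_lists_length_eq[OF finite_constrained_lists[OF V, of u "{}" V], of D]
      card_constrained_lists[OF V, of V "{}" u]
    by (simp add: Fam_def N_def)
  have card_BF: "real (card (BF (S, W)))
      = (real (ffact (card W) (card S)) / real (ffact (card V) (card S))) ^ D * N"
    if SW: "(S, W) \<in> Bad" for S W
  proof -
    have S: "S \<subseteq> {..<u}" and W: "W \<subseteq> V" using Bad SW by auto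
    have su: "card S \<le> u" using card_mono[OF _ S] by simp
    have "card (BF (S, W)) = ffact (card W) (card S) ^ D * ffact (card V - card S) (u - card S) ^ D"
      using card_lists_length_eq[OF finite_constrained_lists[OF V, of u S W], of D]
        card_constrained_lists[OF V W S]
      by (simp add: BF_def power_mult_distrib)
    moreover have "ffact (card V) u
      = ffact (card V) (card S) * ffact (card V - card S) (u - card S)"
      using ffact_split[OF su] .
    moreover have "real (ffact (card V) (card S)) > 0"
      using ffact_pos[of "card S" "card V"] su uv by simp
    ultimately show ?thesis by (simp add: N_def field_simps)
  qed
  have finU: "finite (\<Union>(BF ` Bad))"
    using finB finite_lists_length_eq[OF finite_constrained_lists[OF V]]
    by (auto simp: BF_def conj_commute)
  have "real (card (\<Union>(BF ` Bad))) \<le> (\<Sum>p\<in>Bad. real (card (BF p)))"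
    using card_UN_le[OF finB, of BF] by (simp flip: of_nat_sum)
  also have "\<dots>
      = (\<Sum>(S, W)\<in>Bad. (real (ffact (card W) (card S)) / real (ffact (card V) (card S))) ^ D) * N"
    unfolding sum_distrib_right using card_BF by (intro sum.cong) auto
  also have "\<dots> < real (card Fam)" using union_bound N_pos card_Fam by simp
  finally have "\<not> Fam \<subseteq> \<Union>(BF ` Bad)"
    using card_mono[OF finU, of Fam] by linarith
  then obtain Fs where Fs: "Fs \<in> Fam" and avoid: "\<And>p. p \<in> Bad \<Longrightarrow> Fs \<notin> BF p" by blast
  have "\<exists>f\<in>set Fs. \<exists>i\<in>S. f ! i \<notin> W" if "(S, W) \<in> Bad" for S W
    using avoid[OF that] Fs by (force simp: Fam_def BF_def constrained_lists_def)
  then show ?thesis using Fs by (auto simp: Fam_def)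
qed

lemma sum_pairs_by_card:
  fixes h :: "nat \<Rightarrow> nat \<Rightarrow> real"
  assumes U: "finite U" and V: "finite V"
  shows "(\<Sum>(S, W)\<in>{(S, W). S \<subseteq> U \<and> W \<subseteq> V \<and> card S \<in> R \<and> card W = g (card S)}. h (card S) (card W))
       = (\<Sum>s\<in>R \<inter> {..card U}. real (card U choose s) * real (card V choose g s) * h s (g s))"
proof -
  define P where "P s = {S. S \<subseteq> U \<and> card S = s} \<times> {W. W \<subseteq> V \<and> card W = g s}" for s
  have eq: "{(S, W). S \<subseteq> U \<and> W \<subseteq> V \<and> card S \<in> R \<and> card W = g (card S)} = (\<Union>s\<in>R \<inter> {..card U}. P s)"
    by (auto simp: P_def card_mono[OF U])
  have finP: "finite (P s)" for s
  proof -
    have "finite {S. S \<subseteq> U \<and> card S = s}" by (rule finite_subset[of _ "Pow U"]) (auto simp: U)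
    moreover have "finite {W. W \<subseteq> V \<and> card W = g s}"
      by (rule finite_subset[of _ "Pow V"]) (auto simp: V)
    ultimately show ?thesis unfolding P_def by simp
  qed
  have "(\<Sum>(S, W)\<in>(\<Union>s\<in>R \<inter> {..card U}. P s). h (card S) (card W))
      = (\<Sum>s\<in>R \<inter> {..card U}. \<Sum>(S, W)\<in>P s. h (card S) (card W))"
    by (rule sum.UNION_disjoint) (simp_all add: finP, auto simp: P_def)
  also have "\<dots> = (\<Sum>s\<in>R \<inter> {..card U}. real (card U choose s) * real (card V choose g s) * h s (g s))"
  proof (rule sum.cong[OF refl])
    fix s
    have "(\<Sum>(S, W)\<in>P s. h (card S) (card W)) = real (card (P s)) * h s (g s)"
      by (subst sum.cong[OF refl, of _ _ "\<lambda>_. h s (g s)"]) (auto simp: P_def)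
    also have "card (P s) = (card U choose s) * (card V choose g s)"
      unfolding P_def card_cartesian_product n_subsets[OF U] n_subsets[OF V] ..
    finally show "(\<Sum>(S, W)\<in>P s. h (card S) (card W))
        = real (card U choose s) * real (card V choose g s) * h s (g s)"
      by simp
  qed
  finally show ?thesis unfolding eq .
qed

lemma power_le_3_power_fact: "real s ^ s \<le> 3 ^ s * fact s"
proof (induction s)
  case 0 then show ?case by simp
next
  case (Suc s)
  have step: "(real s + 1) ^ s \<le> 3 * real s ^ s"
  proof (cases "s = 0")
    case True then show ?thesis by simp
  next
    case False
    then have "0 < s" by simp
    moreover have "(1::real) \<ge> - real s" by simp
    ultimately have "(1 + 1 / real s) ^ s \<le> exp 1"
      using exp_ge_one_plus_x_over_n_power_n by simp
    also have "\<dots> \<le> 3" by (rule exp_le)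
    finally have "(1 + 1 / real s) ^ s \<le> 3" .
    moreover have "(real s + 1) ^ s = (1 + 1 / real s) ^ s * real s ^ s"
      using False by (simp add: power_mult_distrib[symmetric] field_simps)
    ultimately show ?thesis by (simp add: mult_right_mono)
  qed
  have "real (Suc s) ^ Suc s = (real s + 1) * (real s + 1) ^ s" by (simp add: add.commute)
  also have "\<dots> \<le> (real s + 1) * (3 * (3 ^ s * fact s))"
    using step Suc.IH by (simp add: mult_left_mono order_trans)
  also have "\<dots> = 3 ^ Suc s * fact (Suc s)" by (simp add: algebra_simps)
  finally show ?case .
qed

lemma inverse_fact_cube_le: "1 / fact s ^ 3 \<le> (27 / real s ^ 3 :: real) ^ s"
proof (cases "s = 0")
  case False
  have "real s ^ s / 3 ^ s \<le> fact s" using power_le_3_power_fact[of s] by (simp add: field_simps)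
  then have "(real s ^ s / 3 ^ s) ^ 3 \<le> fact s ^ 3" by (rule power_mono) simp
  moreover have "(real s ^ s / 3 ^ s) ^ 3 = (real s ^ 3 / 3 ^ 3) ^ s"
    by (simp only: power_divide power_mult[symmetric] mult.commute)
  ultimately have "1 / fact s ^ 3 \<le> 1 / (real s ^ 3 / 27) ^ s"
    using False by (intro divide_left_mono) simp_all
  then show ?thesis by (simp add: power_divide)
qed simp

lemma binomial_le_power_div_fact: "real (n choose k) \<le> real n ^ k / fact k"
proof -
  have "real (n choose k) * fact k \<le> real n ^ k"
    using binomial_fact_pow[of n k] by (metis of_nat_fact of_nat_le_iff of_nat_mult of_nat_power)
  then show ?thesis by (simp add: field_simps)
qed

lemma binomial_double_le_power_div_fact_sq:
  "real (n choose (2 * s)) \<le> real n ^ (2 * s) / (fact s * fact s)"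
proof -
  have "real (n choose (2 * s)) \<le> real n ^ (2 * s) / fact (2 * s)"
    by (rule binomial_le_power_div_fact)
  also have "\<dots> \<le> real n ^ (2 * s) / (fact s * fact s)"
    using square_fact_le_2_fact[of s] by (intro divide_left_mono) simp_all
  finally show ?thesis .
qed

lemma expansion_term_le:
  assumes s1: "1 \<le> s" and sm: "s \<le> m"
  shows "real (7 * m choose s) * real (10 * m choose (2 * s))
           * (real (ffact (2 * s) s) / real (ffact (10 * m) s)) ^ 8 \<le> (1 / 2) ^ s"
proof -
  define y M where "y = real s" and "M = real m"
  define c where "c = 7 * M * (10 * M) ^ 2 * (y / (5 * M)) ^ 8"
  have y1: "1 \<le> y" and yM: "y \<le> M" and M1: "1 \<le> M" using s1 sm by (simp_all add: y_def M_def)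
  have ratio: "real (ffact (2 * s) s) / real (ffact (10 * m) s) \<le> (y / (5 * M)) ^ s"
    using ffact_ratio_le[of "2 * s" "10 * m" s] s1 sm by (simp add: y_def M_def)
  have binom1: "real (7 * m choose s) \<le> (7 * M) ^ s / fact s"
    using binomial_le_power_div_fact[of "7 * m" s] by (simp add: M_def)
  have binom2: "real (10 * m choose (2 * s)) \<le> (10 * M) ^ (2 * s) / (fact s * fact s)"
    using binomial_double_le_power_div_fact_sq[of "10 * m" s] by (simp add: M_def)
  have "real (7 * m choose s) * real (10 * m choose (2 * s))
          * (real (ffact (2 * s) s) / real (ffact (10 * m) s)) ^ 8
      \<le> (7 * M) ^ s / fact s * ((10 * M) ^ (2 * s) / (fact s * fact s)) * ((y / (5 * M)) ^ s) ^ 8"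
    using M1 by (intro mult_mono binom1 binom2 power_mono ratio) simp_all
  also have "\<dots> = c ^ s * (1 / fact s ^ 3)"
  proof -
    have "(10 * M) ^ (2 * s) = ((10 * M) ^ 2) ^ s" by (simp add: power_mult)
    moreover have "((y / (5 * M)) ^ s) ^ 8 = ((y / (5 * M)) ^ 8) ^ s"
      by (simp only: power_mult[symmetric] mult.commute)
    moreover have "c ^ s = (7 * M) ^ s * ((10 * M) ^ 2) ^ s * ((y / (5 * M)) ^ 8) ^ s"
      by (simp only: c_def power_mult_distrib)
    moreover have "a / f * (b / (f * f)) * d = a * b * d * (1 / f ^ 3)" for a b d f :: real
      by (simp add: power3_eq_cube)
    ultimately show ?thesis by (simp add: power3_eq_cube)
  qed
  also have "\<dots> \<le> c ^ s * (27 / y ^ 3) ^ s"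
    using inverse_fact_cube_le[of s] y1 M1 by (intro mult_left_mono) (simp_all add: c_def y_def)
  also have "\<dots> = (18900 / 390625 * (y / M) ^ 5) ^ s"
  proof -
    have "c * (27 / y ^ 3) = 18900 / 390625 * (y / M) ^ 5"
      using y1 M1 unfolding c_def by (simp add: field_simps) algebra
    then show ?thesis by (simp only: power_mult_distrib[symmetric])
  qed
  also have "\<dots> \<le> (1 / 2) ^ s"
  proof (rule power_mono)
    have "(y / M) ^ 5 \<le> 1" using yM y1 by (intro power_le_one) simp_all
    then show "18900 / 390625 * (y / M) ^ 5 \<le> 1 / 2" by simp
  qed (use y1 M1 in simp)
  finally show ?thesis .
qed

lemma connection_term_le:
  assumes m1: "1 \<le> m" and ms: "m \<le> s" and s5: "s \<le> 5 * m + 1"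
  shows "real (7 * m choose s) * real (7 * m choose (s + m - 1))
           * (real (ffact (s + m - 1) s) / real (ffact (7 * m) s)) ^ 80 \<le> (1 / 8) ^ m"
proof -
  have "real (ffact (s + m - 1) s) / real (ffact (7 * m) s) \<le> (real (s + m - 1) / real (7 * m)) ^ s"
    by (rule ffact_ratio_le) (use m1 ms s5 in auto)
  also have "\<dots> \<le> (6 / 7) ^ s"
  proof (rule power_mono)
    have "real (s + m - 1) \<le> 6 * real m" using s5 m1 by linarith
    then show "real (s + m - 1) / real (7 * m) \<le> 6 / 7" using m1 by (simp add: field_simps)
  qed simp
  also have "\<dots> \<le> (6 / 7) ^ m" by (rule power_decreasing) (use ms in auto)
  finally have ratio: "real (ffact (s + m - 1) s) / real (ffact (7 * m) s) \<le> (6 / 7) ^ m" .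
  have binom: "real (7 * m choose k) \<le> 2 ^ (7 * m)" for k
    using binomial_le_pow2[of "7 * m" k] by (metis of_nat_le_iff of_nat_numeral of_nat_power)
  have "real (7 * m choose s) * real (7 * m choose (s + m - 1))
          * (real (ffact (s + m - 1) s) / real (ffact (7 * m) s)) ^ 80
      \<le> 2 ^ (7 * m) * 2 ^ (7 * m) * ((6 / 7) ^ m) ^ 80"
    by (intro mult_mono binom power_mono ratio) auto
  also have "\<dots> = ((2::real) ^ 14 * (6 / 7) ^ 80) ^ m"
  proof -
    have "(2::real) ^ (7 * m) * 2 ^ (7 * m) = (2 ^ 14) ^ m"
      by (simp only: power_add[symmetric] power_mult[symmetric]) simp
    moreover have "((6 / 7 :: real) ^ m) ^ 80 = ((6 / 7) ^ 80) ^ m"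
      by (simp only: power_mult[symmetric] mult.commute)
    ultimately show ?thesis by (simp only: power_mult_distrib)
  qed
  also have "\<dots> \<le> (1 / 8) ^ m"
  proof (rule power_mono)
    have "(2::real) ^ 17 * 6 ^ 80 \<le> 7 ^ 80" by simp
    then show "(2::real) ^ 14 * (6 / 7) ^ 80 \<le> 1 / 8" by (simp add: field_simps)
  qed simp
  finally show ?thesis .
qed

lemma sum_half_powers_less_1: "(\<Sum>s\<in>{1..m}. (1 / 2 :: real) ^ s) < 1"
proof -
  have "(\<Sum>s\<in>{1..m}. (1 / 2 :: real) ^ s) = 1 - (1 / 2) ^ m"
    by (induction m) (auto simp: atLeastAtMostSuc_conv field_simps)
  then show ?thesis by simp
qed

lemma linear_times_power_eighth_less_1: "1 \<le> m \<Longrightarrow> real (4 * m + 2) * (1 / 8) ^ m < 1"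
proof (induction m rule: nat_induct_at_least)
  case base then show ?case by simp
next
  case (Suc m)
  have "real (4 * Suc m + 2) * (1 / 8) ^ Suc m = (real (4 * m + 2) + 4) / 8 * (1 / 8) ^ m" by simp
  also have "\<dots> \<le> real (4 * m + 2) * (1 / 8) ^ m"
    using Suc by (intro mult_right_mono) simp_all
  finally show ?case using Suc.IH by linarith
qed

section \<open>Expanding and connecting families of injections\<close>

lemma exists_superset_with_card:
  assumes "finite V" "U \<subseteq> V" "card U \<le> c" "c \<le> card V"
  shows "\<exists>W. U \<subseteq> W \<and> W \<subseteq> V \<and> card W = c"
proof -
  have finU: "finite U" using assms finite_subset by blast
  have "c - card U \<le> card (V - U)" using assms by (simp add: card_Diff_subset finU)
  then obtain Z where Z: "Z \<subseteq> V - U" "card Z = c - card U" "finite Z"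
    by (rule obtain_subset_with_card_n)
  have "card (U \<union> Z) = card U + card Z" using Z finU by (subst card_Un_disjoint) auto
  then show ?thesis using Z assms by (intro exI[of _ "U \<union> Z"]) auto
qed

definition expanding_family :: "nat \<Rightarrow> nat list list \<Rightarrow> bool" where
  "expanding_family m Fs \<longleftrightarrow> length Fs = 8 \<and> set Fs \<subseteq> inj_lists (7 * m) {..<10 * m} \<and>
     (\<forall>S\<subseteq>{..<7 * m}. 1 \<le> card S \<longrightarrow> card S \<le> m \<longrightarrow> 2 * card S \<le> card (\<Union>f\<in>set Fs. (!) f ` S))"

definition connecting_family :: "nat \<Rightarrow> nat list list \<Rightarrow> bool" where
  "connecting_family m Ps \<longleftrightarrow> length Ps = 80 \<and> set Ps \<subseteq> inj_lists (7 * m) {..<7 * m} \<and>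
     (\<forall>S J. S \<subseteq> {..<7 * m} \<longrightarrow> J \<subseteq> {..<7 * m} \<longrightarrow> m \<le> card S \<longrightarrow> m \<le> card J \<longrightarrow>
        6 * m + 1 \<le> card S + card J \<longrightarrow> (\<exists>p\<in>set Ps. \<exists>i\<in>S. p ! i \<in> J))"

lemma expands_if_avoids:
  assumes Fs: "set Fs \<subseteq> inj_lists u {..<v}"
    and avoid: "\<And>W. W \<subseteq> {..<v} \<Longrightarrow> card W = 2 * card S \<Longrightarrow> \<exists>f\<in>set Fs. \<exists>i\<in>S. f ! i \<notin> W"
    and S: "S \<subseteq> {..<u}" and Sv: "2 * card S \<le> v"
  shows "2 * card S \<le> card (\<Union>f\<in>set Fs. (!) f ` S)"
proof (rule ccontr)
  assume "\<not> ?thesis"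
  moreover have "f ! i \<in> {..<v}" if "f \<in> set Fs" "i \<in> S" for f i
    using inj_listsD(4)[of f u "{..<v}" i] Fs S that by auto
  then have "(\<Union>f\<in>set Fs. (!) f ` S) \<subseteq> {..<v}" by auto
  ultimately obtain W where "(\<Union>f\<in>set Fs. (!) f ` S) \<subseteq> W" "W \<subseteq> {..<v}" "card W = 2 * card S"
    using exists_superset_with_card[of "{..<v}" "\<Union>f\<in>set Fs. (!) f ` S" "2 * card S"] Sv by auto
  with avoid show False by blast
qed

text \<open>Shrinking S and J to sizes s and 6m + 1 - s with m \<le> s \<le> 5m + 1 turns a pair that is not
  joined into a pair (S0, W) with W the complement of the shrunk J.\<close>

lemma connects_if_avoids:
  assumes Ps: "set Ps \<subseteq> inj_lists (7 * m) {..<7 * m}"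
    and avoid: "\<And>S0 W. S0 \<subseteq> {..<7 * m} \<Longrightarrow> W \<subseteq> {..<7 * m} \<Longrightarrow> m \<le> card S0 \<Longrightarrow>
      card S0 \<le> 5 * m + 1 \<Longrightarrow> card W = card S0 + m - 1 \<Longrightarrow> \<exists>p\<in>set Ps. \<exists>i\<in>S0. p ! i \<notin> W"
    and S: "S \<subseteq> {..<7 * m}" and J: "J \<subseteq> {..<7 * m}"
    and "m \<le> card S" "m \<le> card J" "6 * m + 1 \<le> card S + card J"
  shows "\<exists>p\<in>set Ps. \<exists>i\<in>S. p ! i \<in> J"
proof -
  define t where "t = min (card J) (5 * m + 1)"
  define s where "s = 6 * m + 1 - t"
  have "t \<le> card J" "s \<le> card S" "m \<le> s" "s \<le> 5 * m + 1"
    using assms(5-7) by (auto simp: t_def s_def min_def)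
  then obtain S0 J0 where S0: "S0 \<subseteq> S" "card S0 = s" and J0: "J0 \<subseteq> J" "card J0 = t" "finite J0"
    by (meson obtain_subset_with_card_n)
  have "card ({..<7 * m} - J0) = 7 * m - t"
    using J0 J by (simp add: card_Diff_subset)
  also have "\<dots> = card S0 + m - 1"
    using S0 \<open>m \<le> s\<close> \<open>s \<le> 5 * m + 1\<close> by (simp add: t_def s_def min_def)
  finally obtain p i where "p \<in> set Ps" "i \<in> S0" "p ! i \<notin> {..<7 * m} - J0"
    using avoid[of S0 "{..<7 * m} - J0"] S0 S \<open>m \<le> s\<close> \<open>s \<le> 5 * m + 1\<close> by auto
  moreover have "p ! i \<in> {..<7 * m}"
    using inj_listsD(4)[of p "7 * m" "{..<7 * m}" i] Ps \<open>p \<in> set Ps\<close> \<open>i \<in> S0\<close> S0 S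
    by auto
  ultimately show ?thesis using S0 J0 by blast
qed

lemma expanding_family_exists: "\<exists>Fs. expanding_family m Fs"
proof -
  define Bad where "Bad = {(S, W). S \<subseteq> {..<7 * m} \<and> W \<subseteq> {..<10 * m} \<and>
                                    card S \<in> {1..m} \<and> card W = 2 * card S}"
  have finB: "finite Bad"
    by (rule finite_subset[of _ "Pow {..<7 * m} \<times> Pow {..<10 * m}"]) (auto simp: Bad_def)
  have "(\<Sum>(S, W)\<in>Bad. (real (ffact (card W) (card S))
           / real (ffact (card {..<10 * m}) (card S))) ^ 8)
      = (\<Sum>s\<in>{1..m} \<inter> {..card {..<7 * m}}. real (card {..<7 * m} choose s)
           * real (card {..<10 * m} choose (2 * s)) *
           (real (ffact (2 * s) s) / real (ffact (card {..<10 * m}) s)) ^ 8)"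
    unfolding Bad_def
    by (rule sum_pairs_by_card[where g = "\<lambda>s. 2 * s"
          and h = "\<lambda>s w. (real (ffact w s) / real (ffact (card {..<10 * m}) s)) ^ 8"]) simp_all
  also have "\<dots> = (\<Sum>s\<in>{1..m}. real (7 * m choose s) * real (10 * m choose (2 * s)) *
           (real (ffact (2 * s) s) / real (ffact (10 * m) s)) ^ 8)"
    by (intro sum.cong) auto
  also have "\<dots> \<le> (\<Sum>s\<in>{1..m}. (1 / 2) ^ s)"
    by (intro sum_mono expansion_term_le) auto
  also have "\<dots> < 1" by (rule sum_half_powers_less_1)
  finally have "\<exists>Fs. length Fs = 8 \<and> set Fs \<subseteq> inj_lists (7 * m) {..<10 * m} \<and>
                 (\<forall>(S, W)\<in>Bad. \<exists>f\<in>set Fs. \<exists>i\<in>S. f ! i \<notin> W)"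
    by (intro exists_family_avoiding finB) (auto simp: Bad_def)
  then obtain Fs where Fs: "length Fs = 8" "set Fs \<subseteq> inj_lists (7 * m) {..<10 * m}"
    and avoid: "\<forall>(S, W)\<in>Bad. \<exists>f\<in>set Fs. \<exists>i\<in>S. f ! i \<notin> W"
    by blast
  have "2 * card S \<le> card (\<Union>f\<in>set Fs. (!) f ` S)"
    if "S \<subseteq> {..<7 * m}" "1 \<le> card S" "card S \<le> m" for S
    using avoid that by (intro expands_if_avoids[OF Fs(2)]) (auto simp: Bad_def)
  with Fs show ?thesis unfolding expanding_family_def by blast
qed

lemma connecting_family_exists:
  assumes m1: "1 \<le> m"
  shows "\<exists>Ps. connecting_family m Ps"
proof -
  define Bad where "Bad = {(S, W). S \<subseteq> {..<7 * m} \<and> W \<subseteq> {..<7 * m} \<and>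
                                    card S \<in> {m..5 * m + 1} \<and> card W = card S + m - 1}"
  have finB: "finite Bad"
    by (rule finite_subset[of _ "Pow {..<7 * m} \<times> Pow {..<7 * m}"]) (auto simp: Bad_def)
  have "(\<Sum>(S, W)\<in>Bad. (real (ffact (card W) (card S))
           / real (ffact (card {..<7 * m}) (card S))) ^ 80)
      = (\<Sum>s\<in>{m..5 * m + 1} \<inter> {..card {..<7 * m}}. real (card {..<7 * m} choose s)
           * real (card {..<7 * m} choose (s + m - 1)) *
           (real (ffact (s + m - 1) s) / real (ffact (card {..<7 * m}) s)) ^ 80)"
    unfolding Bad_def
    by (rule sum_pairs_by_card[where g = "\<lambda>s. s + m - 1"
          and h = "\<lambda>s w. (real (ffact w s) / real (ffact (card {..<7 * m}) s)) ^ 80"]) simp_all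
  also have "\<dots> = (\<Sum>s\<in>{m..5 * m + 1}. real (7 * m choose s) * real (7 * m choose (s + m - 1)) *
           (real (ffact (s + m - 1) s) / real (ffact (7 * m) s)) ^ 80)"
    using m1 by (intro sum.cong) auto
  also have "\<dots> \<le> (\<Sum>s\<in>{m..5 * m + 1}. (1 / 8) ^ m)"
    using m1 by (intro sum_mono connection_term_le) auto
  also have "\<dots> = real (4 * m + 2) * (1 / 8) ^ m" by simp
  also have "\<dots> < 1" by (rule linear_times_power_eighth_less_1[OF m1])
  finally have "\<exists>Ps. length Ps = 80 \<and> set Ps \<subseteq> inj_lists (7 * m) {..<7 * m} \<and>
                 (\<forall>(S, W)\<in>Bad. \<exists>p\<in>set Ps. \<exists>i\<in>S. p ! i \<notin> W)"
    by (intro exists_family_avoiding finB) (auto simp: Bad_def)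
  then obtain Ps where Ps: "length Ps = 80" "set Ps \<subseteq> inj_lists (7 * m) {..<7 * m}"
    and avoid: "\<forall>(S, W)\<in>Bad. \<exists>p\<in>set Ps. \<exists>i\<in>S. p ! i \<notin> W"
    by blast
  have "\<exists>p\<in>set Ps. \<exists>i\<in>S. p ! i \<in> J"
    if "S \<subseteq> {..<7 * m}" "J \<subseteq> {..<7 * m}" "m \<le> card S" "m \<le> card J"
      "6 * m + 1 \<le> card S + card J" for S J
    using avoid that by (intro connects_if_avoids[OF Ps(2)]) (auto simp: Bad_def)
  with Ps show ?thesis unfolding connecting_family_def by blast
qed

section \<open>Hall's theorem\<close>

lemma hall_condition_Diff_tight:
  fixes R :: "'a \<Rightarrow> 'b set"
  assumes finA: "finite A" and finR: "\<forall>a\<in>A. finite (R a)"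
    and hall: "\<forall>S\<subseteq>A. card S \<le> card (\<Union>(R ` S))"
    and S: "S \<subseteq> A" and tight: "card (\<Union>(R ` S)) = card S"
  shows "\<forall>T\<subseteq>A - S. card T \<le> card (\<Union>((\<lambda>a. R a - \<Union>(R ` S)) ` T))"
proof (intro allI impI)
  fix T assume T: "T \<subseteq> A - S"
  have finS: "finite S" and finT: "finite T" using S T finA finite_subset by blast+
  have fin: "finite (\<Union>(R ` U))" if "U \<subseteq> A" "finite U" for U
    using that finR by blast
  have "card T + card S = card (T \<union> S)"
    using T finS finT by (subst card_Un_disjoint) auto
  also have "\<dots> \<le> card (\<Union>(R ` (T \<union> S)))"
    using hall T S by (metis Diff_subset Un_subset_iff order_trans)
  also have "\<Union>(R ` (T \<union> S)) = \<Union>((\<lambda>a. R a - \<Union>(R ` S)) ` T) \<union> \<Union>(R ` S)" by auto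
  also have "card \<dots> = card (\<Union>((\<lambda>a. R a - \<Union>(R ` S)) ` T)) + card S"
    using fin[of T] fin[OF S finS] T finT tight by (subst card_Un_disjoint) auto
  finally show "card T \<le> card (\<Union>((\<lambda>a. R a - \<Union>(R ` S)) ` T))" by simp
qed

lemma hall_condition_Diff_target:
  fixes R :: "'a \<Rightarrow> 'b set"
  assumes surplus: "\<forall>S\<subseteq>A. S \<noteq> {} \<longrightarrow> S \<noteq> A \<longrightarrow> card S < card (\<Union>(R ` S))" and a: "a \<in> A"
  shows "\<forall>T\<subseteq>A - {a}. card T \<le> card (\<Union>((\<lambda>x. R x - {b}) ` T))"
proof (intro allI impI)
  fix T assume T: "T \<subseteq> A - {a}"
  show "card T \<le> card (\<Union>((\<lambda>x. R x - {b}) ` T))"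
  proof (cases "T = {}")
    case False
    then have "card T < card (\<Union>(R ` T))" using surplus T a by blast
    moreover have "card (\<Union>(R ` T)) - 1 \<le> card (\<Union>(R ` T) - {b})"
      by (simp add: card_Diff_singleton_if)
    moreover have "\<Union>((\<lambda>x. R x - {b}) ` T) = \<Union>(R ` T) - {b}" by auto
    ultimately show ?thesis by simp
  qed simp
qed

lemma inj_on_if_glue:
  assumes "inj_on f S" "inj_on g (A - S)" "f ` S \<inter> g ` (A - S) = {}" "S \<subseteq> A"
  shows "inj_on (\<lambda>a. if a \<in> S then f a else g a) A"
proof -
  let ?h = "\<lambda>a. if a \<in> S then f a else g a"
  have "inj_on ?h S" "inj_on ?h (A - S)" using assms(1,2) by (simp_all add: inj_on_def)
  moreover have "?h ` (S - (A - S)) = f ` S" "?h ` ((A - S) - S) = g ` (A - S)" by auto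
  ultimately have "inj_on ?h (S \<union> (A - S))" using assms(3) by (simp only: inj_on_Un)
  moreover have "S \<union> (A - S) = A" using assms(4) by auto
  ultimately show ?thesis by simp
qed

text \<open>Halmos and Vaughan's induction: either some proper nonempty set of applicants is tight,
  and the problem splits at it, or every such set has a surplus, and any admissible pair may be
  fixed.\<close>

theorem hall_marriage:
  fixes R :: "'a \<Rightarrow> 'b set"
  assumes "finite A" "\<forall>a\<in>A. finite (R a)" "\<forall>S\<subseteq>A. card S \<le> card (\<Union>(R ` S))"
  shows "\<exists>f. inj_on f A \<and> (\<forall>a\<in>A. f a \<in> R a)"
  using assms
proof (induction "card A" arbitrary: A R rule: less_induct)
  case less
  show ?case
  proof (cases "\<exists>S. S \<subseteq> A \<and> S \<noteq> {} \<and> S \<noteq> A \<and> card (\<Union>(R ` S)) = card S")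
    case True
    then obtain S where S: "S \<subseteq> A" "S \<noteq> {}" "S \<noteq> A" and tight: "card (\<Union>(R ` S)) = card S"
      by blast
    define R' where "R' a = R a - \<Union>(R ` S)" for a
    have finS: "finite S" using S less.prems(1) finite_subset by blast
    have "card S < card A" using S less.prems(1) by (simp add: psubset_card_mono psubsetI)
    moreover have "\<forall>a\<in>S. finite (R a)" "\<forall>U\<subseteq>S. card U \<le> card (\<Union>(R ` U))"
      using S less.prems by blast+
    ultimately obtain f1 where f1: "inj_on f1 S" "\<forall>a\<in>S. f1 a \<in> R a"
      using less.hyps[of S R] finS by blast
    have "card (A - S) < card A"
      using S less.prems(1) finS by (metis card_Diff_subset card_gt_0_iff diff_less subset_empty)
    moreover have "\<forall>T\<subseteq>A - S. card T \<le> card (\<Union>(R' ` T))"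
      unfolding R'_def by (rule hall_condition_Diff_tight[OF less.prems S(1) tight])
    moreover have "\<forall>a\<in>A - S. finite (R' a)" using less.prems(2) by (simp add: R'_def)
    ultimately obtain f2 where f2: "inj_on f2 (A - S)" "\<forall>a\<in>A - S. f2 a \<in> R' a"
      using less.hyps[of "A - S" R'] less.prems(1) by blast
    define f where "f a = (if a \<in> S then f1 a else f2 a)" for a
    have "f1 ` S \<inter> f2 ` (A - S) = {}" using f1(2) f2(2) by (fastforce simp: R'_def)
    then have "inj_on f A"
      unfolding f_def using inj_on_if_glue[OF f1(1) f2(1) _ S(1)] by blast
    moreover have "\<forall>a\<in>A. f a \<in> R a" using f1(2) f2(2) by (simp add: f_def R'_def)
    ultimately show ?thesis by blast
  next
    case False
    have surplus: "\<forall>S\<subseteq>A. S \<noteq> {} \<longrightarrow> S \<noteq> A \<longrightarrow> card S < card (\<Union>(R ` S))"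
    proof (intro allI impI)
      fix S assume "S \<subseteq> A" "S \<noteq> {}" "S \<noteq> A"
      then have "card S \<le> card (\<Union>(R ` S))" "card (\<Union>(R ` S)) \<noteq> card S"
        using less.prems(3) False by blast+
      then show "card S < card (\<Union>(R ` S))" by linarith
    qed
    show ?thesis
    proof (cases "A = {}")
      case False
      then obtain a where a: "a \<in> A" by blast
      then have "card {a} \<le> card (\<Union>(R ` {a}))" using less.prems(3) by blast
      then have "R a \<noteq> {}" by auto
      then obtain b where b: "b \<in> R a" by blast
      have "card (A - {a}) < card A" using a less.prems(1) by (meson card_Diff1_less)
      moreover have "\<forall>x\<in>A - {a}. finite (R x - {b})" using less.prems(2) by blast
      ultimately obtain g where g: "inj_on g (A - {a})" "\<forall>x\<in>A - {a}. g x \<in> R x - {b}"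
        using less.hyps[of "A - {a}" "\<lambda>x. R x - {b}"] less.prems(1)
          hall_condition_Diff_target[OF surplus a] by blast
      have "inj_on (g(a := b)) (insert a (A - {a}))"
        using g by (auto simp: inj_on_def)
      moreover have "insert a (A - {a}) = A" using a by auto
      ultimately show ?thesis using g b by (intro exI[of _ "g(a := b)"]) auto
    qed simp
  qed
qed

lemma perfect_matching_if_hall:
  assumes finA: "finite A" and finB: "finite B" and card_eq: "card A = card B"
    and hall: "\<forall>S\<subseteq>A. card S \<le> card {b\<in>B. \<exists>a\<in>S. (a, b) \<in> E}"
  shows "bip_has_perfect_matching A B E"
proof -
  define R where "R a = {b\<in>B. (a, b) \<in> E}" for a
  have "\<Union>(R ` S) = {b\<in>B. \<exists>a\<in>S. (a, b) \<in> E}" for S by (auto simp: R_def)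
  then have hallR: "\<forall>S\<subseteq>A. card S \<le> card (\<Union>(R ` S))" using hall by simp
  have finR: "\<forall>a\<in>A. finite (R a)" using finB by (simp add: R_def)
  obtain f where f: "inj_on f A" "\<forall>a\<in>A. f a \<in> R a"
    using hall_marriage[OF finA finR hallR] by blast
  have "f ` A \<subseteq> B" using f(2) by (auto simp: R_def)
  then have fAB: "f ` A = B"
    by (rule card_seteq[OF finB]) (simp add: card_image[OF f(1)] card_eq)
  define M where "M = (\<lambda>a. (a, f a)) ` A"
  have "M \<subseteq> E \<inter> A \<times> B" using f(2) by (auto simp: M_def R_def)
  moreover have "\<exists>!b. (a, b) \<in> M" if "a \<in> A" for a using that by (auto simp: M_def)
  moreover have "\<exists>!a. (a, b) \<in> M" if b: "b \<in> B" for b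
  proof -
    obtain a where "a \<in> A" "f a = b" using fAB b by blast
    moreover have "a' = a" if "(a', b) \<in> M" for a'
      using that \<open>a \<in> A\<close> \<open>f a = b\<close> f(1) by (auto simp: M_def inj_on_def)
    ultimately show ?thesis by (auto simp: M_def)
  qed
  ultimately show ?thesis unfolding bip_has_perfect_matching_def by (intro exI[of _ M]) simp
qed

section \<open>Completing a bipartite graph to a regular one\<close>

definition left_degree :: "('a \<times> 'b) set \<Rightarrow> 'a \<Rightarrow> nat" where
  "left_degree E a = card {b. (a, b) \<in> E}"

definition right_degree :: "('a \<times> 'b) set \<Rightarrow> 'b \<Rightarrow> nat" where
  "right_degree E b = card {a. (a, b) \<in> E}"

lemma finite_left_fibre: "finite E \<Longrightarrow> finite {b. (a, b) \<in> E}"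
  by (rule finite_subset[of _ "snd ` E"]) force+

lemma finite_right_fibre: "finite E \<Longrightarrow> finite {a. (a, b) \<in> E}"
  by (rule finite_subset[of _ "fst ` E"]) force+

lemma left_degree_insert:
  assumes "finite E" "(x, y) \<notin> E"
  shows "left_degree (insert (x, y) E) a
       = (if x = a then Suc (left_degree E a) else left_degree E a)"
proof -
  have "{b. (a, b) \<in> insert (x, y) E}
      = (if x = a then insert y {b. (a, b) \<in> E} else {b. (a, b) \<in> E})"
    by auto
  then show ?thesis using assms finite_left_fibre[OF assms(1), of a]
    by (cases "x = a") (simp_all add: left_degree_def)
qed

lemma right_degree_insert:
  assumes "finite E" "(x, y) \<notin> E"
  shows "right_degree (insert (x, y) E) b
       = (if y = b then Suc (right_degree E b) else right_degree E b)"
proof -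
  have "{a. (a, b) \<in> insert (x, y) E}
      = (if y = b then insert x {a. (a, b) \<in> E} else {a. (a, b) \<in> E})"
    by auto
  then show ?thesis using assms finite_right_fibre[OF assms(1), of b]
    by (cases "y = b") (simp_all add: right_degree_def)
qed

lemma left_degree_remove:
  assumes "finite E" "(x, y) \<in> E"
  shows "left_degree (E - {(x, y)}) a = (if x = a then left_degree E a - 1 else left_degree E a)"
proof -
  have "{b. (a, b) \<in> E - {(x, y)}} = (if x = a then {b. (a, b) \<in> E} - {y} else {b. (a, b) \<in> E})"
    by auto
  then show ?thesis using assms finite_left_fibre[OF assms(1), of a]
    by (cases "x = a") (simp_all add: left_degree_def)
qed

lemma right_degree_remove:
  assumes "finite E" "(x, y) \<in> E"
  shows "right_degree (E - {(x, y)}) b = (if y = b then right_degree E b - 1 else right_degree E b)"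
proof -
  have "{a. (a, b) \<in> E - {(x, y)}} = (if y = b then {a. (a, b) \<in> E} - {x} else {a. (a, b) \<in> E})"
    by auto
  then show ?thesis using assms finite_right_fibre[OF assms(1), of b]
    by (cases "y = b") (simp_all add: right_degree_def)
qed

lemma card_eq_sum_left_degree:
  assumes "finite A" "finite B" "E \<subseteq> A \<times> B"
  shows "card E = (\<Sum>a\<in>A. left_degree E a)"
proof -
  have "finite E" using assms finite_subset by blast
  then have "card (SIGMA a:A. {b. (a, b) \<in> E}) = (\<Sum>a\<in>A. card {b. (a, b) \<in> E})"
    using assms(1) finite_left_fibre by (intro card_SigmaI) auto
  moreover have "E = (SIGMA a:A. {b. (a, b) \<in> E})" using assms(3) by auto
  ultimately show ?thesis by (simp add: left_degree_def)
qed

lemma card_eq_sum_right_degree: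
  assumes "finite A" "finite B" "E \<subseteq> A \<times> B"
  shows "card E = (\<Sum>b\<in>B. right_degree E b)"
proof -
  have "card E = card (prod.swap ` E)" by (simp add: card_image)
  also have "\<dots> = (\<Sum>b\<in>B. left_degree (prod.swap ` E) b)"
    by (rule card_eq_sum_left_degree[OF assms(2,1)]) (use assms(3) in auto)
  also have "\<dots> = (\<Sum>b\<in>B. right_degree E b)"
  proof (rule sum.cong[OF refl])
    fix b have "{a. (b, a) \<in> prod.swap ` E} = {a. (a, b) \<in> E}" by force
    then show "left_degree (prod.swap ` E) b = right_degree E b"
      by (simp add: left_degree_def right_degree_def)
  qed
  finally show ?thesis .
qed

lemma exists_less_if_sum_less:
  fixes f :: "'a \<Rightarrow> nat"
  assumes "(\<Sum>a\<in>A. f a) < card A * d"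
  shows "\<exists>a\<in>A. f a < d"
proof (rule ccontr)
  assume "\<not> (\<exists>a\<in>A. f a < d)"
  then have "(\<Sum>a\<in>A. d) \<le> (\<Sum>a\<in>A. f a)" by (intro sum_mono) auto
  then show False using assms by simp
qed

lemma all_eq_if_sum_ge:
  fixes f :: "'a \<Rightarrow> nat"
  assumes "finite A" "\<forall>a\<in>A. f a \<le> d" "card A * d \<le> (\<Sum>a\<in>A. f a)"
  shows "\<forall>a\<in>A. f a = d"
proof (rule ccontr)
  assume "\<not> (\<forall>a\<in>A. f a = d)"
  then obtain a where "a \<in> A" "f a < d" using assms(2) le_neq_implies_less by blast
  then have "(\<Sum>a\<in>A. f a) < (\<Sum>a\<in>A. d)"
    using assms by (intro sum_strict_mono_ex1) auto
  then show False using assms(3) by simp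
qed

lemma card_le_card_mult_if_neighbours:
  assumes "finite E" "finite N" "\<forall>b\<in>N. right_degree E b \<le> d" "\<forall>a\<in>X. \<exists>b\<in>N. (a, b) \<in> E"
  shows "card X \<le> card N * d"
proof -
  have "X \<subseteq> (\<Union>b\<in>N. {a. (a, b) \<in> E})" using assms(4) by blast
  then have "card X \<le> card (\<Union>b\<in>N. {a. (a, b) \<in> E})"
    using assms(1,2) finite_right_fibre by (intro card_mono) auto
  also have "\<dots> \<le> (\<Sum>b\<in>N. right_degree E b)"
    unfolding right_degree_def using assms(2) by (rule card_UN_le)
  also have "\<dots> \<le> card N * d" using assms(3) sum_bounded_above[of N _ d] by simp
  finally show ?thesis .
qed

definition bounded_supergraph ::
    "'a set \<Rightarrow> 'b set \<Rightarrow> nat \<Rightarrow> ('a \<times> 'b) set \<Rightarrow> ('a \<times> 'b) set \<Rightarrow> bool" where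
  "bounded_supergraph A B d E0 E \<longleftrightarrow> E0 \<subseteq> E \<and> E \<subseteq> A \<times> B \<and>
     (\<forall>a\<in>A. left_degree E a \<le> d) \<and> (\<forall>b\<in>B. right_degree E b \<le> d)"

lemma bounded_supergraph_finite:
  "finite A \<Longrightarrow> finite B \<Longrightarrow> bounded_supergraph A B d E0 E \<Longrightarrow> finite E"
  unfolding bounded_supergraph_def using finite_subset by blast

lemma bounded_supergraph_insert:
  assumes "finite A" "finite B" and I: "bounded_supergraph A B d E0 E"
    and "a \<in> A" "b \<in> B" "(a, b) \<notin> E" "left_degree E a < d" "right_degree E b < d"
  shows "bounded_supergraph A B d E0 (insert (a, b) E) \<and> card (insert (a, b) E) = Suc (card E)"
  using assms bounded_supergraph_finite[OF assms(1-3)]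
  by (auto simp: bounded_supergraph_def left_degree_insert right_degree_insert)

text \<open>When b cannot be joined to any deficient vertex, an edge (x, y) outside E0 is traded for
  (x, b) and (a, y): the degrees of x and y are unchanged, those of a and b grow by one.\<close>

lemma bounded_supergraph_switch:
  assumes "finite A" "finite B" and I: "bounded_supergraph A B d E0 E"
    and a: "a \<in> A" "left_degree E a < d" and b: "b \<in> B" "right_degree E b < d"
    and "x \<in> A" "y \<in> B" and xb: "(x, b) \<notin> E" and ay: "(a, y) \<notin> E"
    and xy: "(x, y) \<in> E" "(x, y) \<notin> E0"
  shows "bounded_supergraph A B d E0 (insert (a, y) (insert (x, b) (E - {(x, y)})))
       \<and> card (insert (a, y) (insert (x, b) (E - {(x, y)}))) = Suc (card E)"
proof -
  have finE: "finite E" using bounded_supergraph_finite[OF assms(1-3)] .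
  have "a \<noteq> x" "b \<noteq> y" using xb ay xy by auto
  have "0 < left_degree E x" "0 < right_degree E y"
    using xy finite_left_fibre[OF finE, of x] finite_right_fibre[OF finE, of y]
    by (auto simp: left_degree_def right_degree_def card_gt_0_iff)
  then show ?thesis
    using I a b assms(8,9) xb ay xy finE \<open>a \<noteq> x\<close> \<open>b \<noteq> y\<close> card_Suc_Diff1[OF finE xy(1)]
    by (auto simp: bounded_supergraph_def left_degree_insert right_degree_insert
        left_degree_remove right_degree_remove)
qed

text \<open>If no switch existed, the at least n - (d - 1) non-neighbours of b would all be joined
  to the at most d - 1 neighbours of a, which is impossible once d * d \<le> n.\<close>

lemma exists_switch:
  assumes "finite A" "finite B" and cA: "card A = n" and big: "d * d \<le> n"
    and I: "bounded_supergraph A B d E0 E" and E0: "\<forall>x\<in>A. left_degree E0 x < d"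
    and a: "left_degree E a < d" and b: "right_degree E b < d"
    and full: "\<forall>x\<in>A. (x, b) \<notin> E \<longrightarrow> d \<le> left_degree E x"
  shows "\<exists>x\<in>A. \<exists>y\<in>B. (x, b) \<notin> E \<and> (a, y) \<notin> E \<and> (x, y) \<in> E \<and> (x, y) \<notin> E0"
proof (rule ccontr)
  assume no_switch: "\<not> ?thesis"
  have finE: "finite E" using bounded_supergraph_finite[OF assms(1,2) I] .
  have EAB: "E \<subseteq> A \<times> B" and E0E: "E0 \<subseteq> E" using I by (auto simp: bounded_supergraph_def)
  define Na Nb where "Na = {y. (a, y) \<in> E}" and "Nb = {x. (x, b) \<in> E}"
  have "\<exists>y\<in>Na. (x, y) \<in> E" if x: "x \<in> A - Nb" for x
  proof -
    have "left_degree E0 x < left_degree E x" using full E0 x by (fastforce simp: Nb_def)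
    moreover have "finite E0" using finE E0E finite_subset by blast
    ultimately have "\<not> {y. (x, y) \<in> E} \<subseteq> {y. (x, y) \<in> E0}"
      using card_mono[OF finite_left_fibre[OF \<open>finite E0\<close>, of x]] unfolding left_degree_def
      by (meson leD)
    then obtain y where "(x, y) \<in> E" "(x, y) \<notin> E0" by blast
    moreover have "y \<in> B" using \<open>(x, y) \<in> E\<close> EAB by auto
    ultimately show ?thesis using no_switch x by (auto simp: Na_def Nb_def)
  qed
  then have "card (A - Nb) \<le> card Na * d"
    using I finE finite_left_fibre[OF finE]
    by (intro card_le_card_mult_if_neighbours) (auto simp: Na_def bounded_supergraph_def)
  moreover have "card Na \<le> d - 1" "card Nb \<le> d - 1"
    using a b by (simp_all add: Na_def Nb_def left_degree_def right_degree_def)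
  moreover have "card A - card Nb \<le> card (A - Nb)"
    by (rule diff_card_le_card_Diff) (simp add: Nb_def finite_right_fibre[OF finE])
  ultimately have "n - (d - 1) \<le> (d - 1) * d"
    using cA by (meson le_trans diff_le_mono2 mult_le_mono1)
  then show False using big a by (cases d) auto
qed

lemma bounded_supergraph_grow:
  assumes "finite A" "finite B" "card A = n" "card B = n" "d * d \<le> n"
    and I: "bounded_supergraph A B d E0 E" and "card E < n * d"
    and E0: "\<forall>x\<in>A. left_degree E0 x < d"
  shows "\<exists>E'. bounded_supergraph A B d E0 E' \<and> card E' = Suc (card E)"
proof -
  have EAB: "E \<subseteq> A \<times> B" using I by (simp add: bounded_supergraph_def)
  obtain a where a: "a \<in> A" "left_degree E a < d"
    using exists_less_if_sum_less[of "left_degree E" A d]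
      assms card_eq_sum_left_degree[OF assms(1,2) EAB]
    by auto
  obtain b where b: "b \<in> B" "right_degree E b < d"
    using exists_less_if_sum_less[of "right_degree E" B d]
      assms card_eq_sum_right_degree[OF assms(1,2) EAB]
    by auto
  show ?thesis
  proof (cases "\<exists>x\<in>A. (x, b) \<notin> E \<and> left_degree E x < d")
    case True
    then show ?thesis using bounded_supergraph_insert[OF assms(1,2) I _ b(1)] b(2) by blast
  next
    case False
    then obtain x y where "x \<in> A" "y \<in> B" "(x, b) \<notin> E" "(a, y) \<notin> E" "(x, y) \<in> E" "(x, y) \<notin> E0"
      using exists_switch[OF assms(1,2,3,5) I E0 a(2) b(2)] by (meson not_le)
    then show ?thesis using bounded_supergraph_switch[OF assms(1,2) I a b] by blast
  qed
qed

theorem regular_supergraph_exists: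
  assumes "finite A" "finite B" "card A = n" "card B = n" "d * d \<le> n" "E0 \<subseteq> A \<times> B"
    and E0: "\<forall>a\<in>A. left_degree E0 a < d" "\<forall>b\<in>B. right_degree E0 b < d"
  shows "\<exists>E. E0 \<subseteq> E \<and> E \<subseteq> A \<times> B \<and> (\<forall>a\<in>A. left_degree E a = d) \<and> (\<forall>b\<in>B. right_degree E b = d)"
proof -
  have "\<exists>E'. bounded_supergraph A B d E0 E' \<and> n * d \<le> card E'"
    if "bounded_supergraph A B d E0 E" for E
    using that
  proof (induction "n * d - card E" arbitrary: E rule: less_induct)
    case less
    show ?case
    proof (cases "card E < n * d")
      case True
      then obtain E1 where "bounded_supergraph A B d E0 E1" "card E1 = Suc (card E)"
        using bounded_supergraph_grow[OF assms(1-5) less.prems _ E0(1)] by blast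
      with True less.hyps[of E1] show ?thesis by auto
    qed (use less.prems in auto)
  qed
  moreover have "bounded_supergraph A B d E0 E0"
    using assms by (auto simp: bounded_supergraph_def less_imp_le)
  ultimately obtain E where I: "bounded_supergraph A B d E0 E" and "n * d \<le> card E" by blast
  have EAB: "E \<subseteq> A \<times> B" using I by (simp add: bounded_supergraph_def)
  have "\<forall>a\<in>A. left_degree E a = d"
    using I \<open>n * d \<le> card E\<close> assms(3) card_eq_sum_left_degree[OF assms(1,2) EAB]
    by (intro all_eq_if_sum_ge[OF assms(1)]) (auto simp: bounded_supergraph_def)
  moreover have "\<forall>b\<in>B. right_degree E b = d"
    using I \<open>n * d \<le> card E\<close> assms(4) card_eq_sum_right_degree[OF assms(1,2) EAB]
    by (intro all_eq_if_sum_ge[OF assms(2)]) (auto simp: bounded_supergraph_def)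
  ultimately show ?thesis using I by (auto simp: bounded_supergraph_def)
qed

lemma card_indices_nth_in_le:
  assumes "distinct xs" "finite T"
  shows "card {i. i < length xs \<and> xs ! i \<in> T} \<le> card T"
proof -
  have "inj_on ((!) xs) {i. i < length xs \<and> xs ! i \<in> T}"
    using assms(1) by (auto simp: inj_on_def nth_eq_iff_index_eq)
  then show ?thesis using assms(2) card_inj_on_le[of "(!) xs"] by blast
qed

lemma card_indices_nth_mod_eq_le_2:
  fixes xs :: "nat list"
  assumes "distinct xs" "set xs \<subseteq> {..<2 * M}"
  shows "card {i. i < length xs \<and> xs ! i mod M = r} \<le> 2"
proof -
  have "xs ! i \<in> {r, r + M}" if "i < length xs" "xs ! i mod M = r" for i
  proof -
    have "xs ! i < 2 * M" using assms(2) that(1) nth_mem by blast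
    then have "xs ! i div M < 2" by (rule less_mult_imp_div_less)
    then show ?thesis using that(2) div_mult_mod_eq[of "xs ! i" M] by (auto simp: less_2_cases_iff)
  qed
  then have "card {i. i < length xs \<and> xs ! i mod M = r}
      \<le> card {i. i < length xs \<and> xs ! i \<in> {r, r + M}}"
    by (intro card_mono) auto
  also have "\<dots> \<le> card {r, r + M}" by (rule card_indices_nth_in_le[OF assms(1)]) simp
  also have "\<dots> \<le> 2" by (simp add: card_insert_if)
  finally show ?thesis .
qed

lemma card_le_2_card_mod_image:
  fixes U :: "nat set"
  assumes U: "U \<subseteq> {..<2 * M}"
  shows "card U \<le> 2 * card ((\<lambda>v. v mod M) ` U)"
proof -
  have finU: "finite U" using U finite_subset by blast
  have fibre: "{v \<in> U. v mod M = r} \<subseteq> {r, r + M}" for r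
  proof
    fix v assume v: "v \<in> {v \<in> U. v mod M = r}"
    then have "v div M < 2" using U less_mult_imp_div_less by auto
    then show "v \<in> {r, r + M}" using v div_mult_mod_eq[of v M] by (auto simp: less_2_cases_iff)
  qed
  have "card U \<le> card (\<Union>r\<in>(\<lambda>v. v mod M) ` U. {v \<in> U. v mod M = r})"
    using finU by (intro card_mono) auto
  also have "\<dots> \<le> (\<Sum>r\<in>(\<lambda>v. v mod M) ` U. card {v \<in> U. v mod M = r})"
    using finU by (intro card_UN_le) auto
  also have "\<dots> \<le> (\<Sum>r\<in>(\<lambda>v. v mod M) ` U. 2)"
  proof (rule sum_mono)
    fix r
    have "card {v \<in> U. v mod M = r} \<le> card {r, r + M}" by (rule card_mono[OF _ fibre]) simp
    also have "\<dots> \<le> 2" by (simp add: card_insert_if)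
    finally show "card {v \<in> U. v mod M = r} \<le> 2" .
  qed
  finally show ?thesis by simp
qed

lemma expanding_family_folds:
  assumes F: "expanding_family m Fs" and S: "S \<subseteq> {..<7 * m}" "1 \<le> card S" "card S \<le> m"
  shows "card S \<le> card (\<Union>f\<in>set Fs. (\<lambda>i. f ! i mod (5 * m)) ` S)"
proof -
  define U where "U = (\<Union>f\<in>set Fs. (!) f ` S)"
  have "f ! i < 2 * (5 * m)" if "f \<in> set Fs" "i \<in> S" for f i
    using inj_listsD(4)[of f "7 * m" "{..<10 * m}" i] F S(1) that
      by (auto simp: expanding_family_def)
  then have "U \<subseteq> {..<2 * (5 * m)}" by (auto simp: U_def)
  then have "card U \<le> 2 * card ((\<lambda>v. v mod (5 * m)) ` U)" by (rule card_le_2_card_mod_image)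
  moreover have "2 * card S \<le> card U" using F S by (simp add: U_def expanding_family_def)
  moreover have "(\<lambda>v. v mod (5 * m)) ` U = (\<Union>f\<in>set Fs. (\<lambda>i. f ! i mod (5 * m)) ` S)"
    by (simp add: U_def image_UN image_image)
  ultimately show ?thesis by simp
qed

lemma card_UN_set_le:
  assumes "\<And>x. x \<in> set xs \<Longrightarrow> card (X x) \<le> c"
  shows "card (\<Union>x\<in>set xs. X x) \<le> length xs * c"
proof -
  have "card (\<Union>x\<in>set xs. X x) \<le> (\<Sum>x\<in>set xs. card (X x))" by (rule card_UN_le) simp
  also have "\<dots> \<le> card (set xs) * c"
    using sum_bounded_above[of "set xs" "\<lambda>x. card (X x)" c] assms by simp
  also have "\<dots> \<le> length xs * c" by (simp add: card_length)
  finally show ?thesis .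
qed

lemma card_Un3_le: "card (X \<union> Y \<union> Z) \<le> card X + card Y + card Z"
  by (meson add_le_mono card_Un_le le_refl order_trans)

lemma card_image_set_le_length: "card (h ` set xs) \<le> length xs"
  using card_image_le[OF finite_set, of h xs] card_length[of xs] by linarith

text \<open>Reduced modulo 5m, an injection into {..<10m} maps at most two indices to each core vertex,
  so every vertex meets at most 80 + 8 + 2 * 8 < 256 base edges.\<close>

locale robust_matching_construction =
  fixes m :: nat and P F G :: "nat list list"
  assumes connecting: "connecting_family m P"
    and expanding: "expanding_family m F" "expanding_family m G"
    and m_pos: "1 \<le> m"
begin

definition A :: "nat set" where "A = {..<7 * m}"
definition B :: "nat set" where "B = {7 * m..<14 * m}"
definition A' :: "nat set" where "A' = {..<2 * m}"
definition B' :: "nat set" where "B' = {7 * m..<9 * m}"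

definition base_edges :: "(nat \<times> nat) set" where
  "base_edges =
     {(i, 7 * m + p ! i) | i p. i < 7 * m \<and> p \<in> set P} \<union>
     {(i, 9 * m + f ! i mod (5 * m)) | i f. i < 7 * m \<and> f \<in> set F} \<union>
     {(2 * m + g ! j mod (5 * m), 7 * m + j) | j g. j < 7 * m \<and> g \<in> set G}"

lemma
  shows P_length: "length P = 80" and F_length: "length F = 8" and G_length: "length G = 8"
    and P_inj: "p \<in> set P \<Longrightarrow> p \<in> inj_lists (7 * m) {..<7 * m}"
    and F_inj: "f \<in> set F \<Longrightarrow> f \<in> inj_lists (7 * m) {..<2 * (5 * m)}"
    and G_inj: "g \<in> set G \<Longrightarrow> g \<in> inj_lists (7 * m) {..<2 * (5 * m)}"
  using connecting expanding by (auto simp: connecting_family_def expanding_family_def)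

lemma base_edgesI:
  "i < 7 * m \<Longrightarrow> p \<in> set P \<Longrightarrow> (i, 7 * m + p ! i) \<in> base_edges"
  "i < 7 * m \<Longrightarrow> f \<in> set F \<Longrightarrow> (i, 9 * m + f ! i mod (5 * m)) \<in> base_edges"
  "j < 7 * m \<Longrightarrow> g \<in> set G \<Longrightarrow> (2 * m + g ! j mod (5 * m), 7 * m + j) \<in> base_edges"
  unfolding base_edges_def by blast+

lemma base_edges_subset: "base_edges \<subseteq> A \<times> B"
  using m_pos inj_listsD(4)[OF P_inj] by (auto simp: base_edges_def A_def B_def)

lemma left_degree_base_edges_less: "left_degree base_edges a < 256"
proof -
  define S1 S2 S3 where "S1 = (\<lambda>p. 7 * m + p ! a) ` set P"
    and "S2 = (\<lambda>f. 9 * m + f ! a mod (5 * m)) ` set F"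
    and "S3 = (\<Union>g\<in>set G. (+) (7 * m) ` {j. j < length g \<and> g ! j mod (5 * m) = a - 2 * m})"
  have "{b. (a, b) \<in> base_edges} \<subseteq> S1 \<union> S2 \<union> S3"
    using inj_listsD(1)[OF G_inj] by (auto simp: base_edges_def S1_def S2_def S3_def)
  then have "left_degree base_edges a \<le> card (S1 \<union> S2 \<union> S3)"
    unfolding left_degree_def by (rule card_mono[rotated]) (simp add: S1_def S2_def S3_def)
  moreover have "card S1 \<le> 80" "card S2 \<le> 8"
    unfolding S1_def S2_def P_length[symmetric] F_length[symmetric]
    by (rule card_image_set_le_length)+
  moreover have "card S3 \<le> 8 * 2" unfolding S3_def G_length[symmetric]
  proof (rule card_UN_set_le)
    fix g assume "g \<in> set G"
    then show "card ((+) (7 * m) ` {j. j < length g \<and> g ! j mod (5 * m) = a - 2 * m}) \<le> 2"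
      using card_indices_nth_mod_eq_le_2 inj_listsD(2,3)[OF G_inj] by (simp add: card_image)
  qed
  ultimately show ?thesis using card_Un3_le[of S1 S2 S3] by linarith
qed

lemma right_degree_base_edges_less: "right_degree base_edges b < 256"
proof -
  define S1 S2 S3 where "S1 = (\<Union>p\<in>set P. {i. i < length p \<and> p ! i \<in> {b - 7 * m}})"
    and "S2 = (\<Union>f\<in>set F. {i. i < length f \<and> f ! i mod (5 * m) = b - 9 * m})"
    and "S3 = (\<lambda>g. 2 * m + g ! (b - 7 * m) mod (5 * m)) ` set G"
  have "{a. (a, b) \<in> base_edges} \<subseteq> S1 \<union> S2 \<union> S3"
    using inj_listsD(1)[OF P_inj] inj_listsD(1)[OF F_inj]
    by (auto simp: base_edges_def S1_def S2_def S3_def)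
  then have "right_degree base_edges b \<le> card (S1 \<union> S2 \<union> S3)"
    unfolding right_degree_def by (rule card_mono[rotated]) (simp add: S1_def S2_def S3_def)
  moreover have "card S1 \<le> 80 * 1" unfolding S1_def P_length[symmetric]
  proof (rule card_UN_set_le)
    fix p assume "p \<in> set P"
    then show "card {i. i < length p \<and> p ! i \<in> {b - 7 * m}} \<le> 1"
      using card_indices_nth_in_le[OF inj_listsD(2)[OF P_inj], of p "{b - 7 * m}"] by simp
  qed
  moreover have "card S2 \<le> 8 * 2" unfolding S2_def F_length[symmetric]
  proof (rule card_UN_set_le)
    fix f assume "f \<in> set F"
    then show "card {i. i < length f \<and> f ! i mod (5 * m) = b - 9 * m} \<le> 2"
      using card_indices_nth_mod_eq_le_2 inj_listsD(2,3)[OF F_inj] by simp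
  qed
  moreover have "card S3 \<le> 8"
    unfolding S3_def G_length[symmetric] by (rule card_image_set_le_length)
  ultimately show ?thesis using card_Un3_le[of S1 S2 S3] by linarith
qed

lemma regular_extension_exists:
  assumes "256 * 256 \<le> 7 * m"
  shows "\<exists>E. base_edges \<subseteq> E \<and> E \<subseteq> A \<times> B \<and> bip_regular 256 A B E"
proof -
  have "finite A" "finite B" "card A = 7 * m" "card B = 7 * m" by (simp_all add: A_def B_def)
  moreover have "\<forall>a\<in>A. left_degree base_edges a < 256" "\<forall>b\<in>B. right_degree base_edges b < 256"
    using left_degree_base_edges_less right_degree_base_edges_less by blast+
  ultimately obtain E where E: "base_edges \<subseteq> E" "E \<subseteq> A \<times> B"
    and deg: "\<forall>a\<in>A. left_degree E a = 256" "\<forall>b\<in>B. right_degree E b = 256"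
    using regular_supergraph_exists[OF _ _ _ _ assms base_edges_subset] by blast
  have "{b\<in>B. (a, b) \<in> E} = {b. (a, b) \<in> E}" "{a'\<in>A. (a', b) \<in> E} = {a'. (a', b) \<in> E}" for a b
    using E(2) by auto
  then have "bip_regular 256 A B E"
    using deg by (simp add: bip_regular_def left_degree_def right_degree_def)
  with E show ?thesis by blast
qed

lemma shift_of_subset_B:
  assumes "T \<subseteq> B"
  shows "(\<lambda>b. b - 7 * m) ` T \<subseteq> {..<7 * m}" "card ((\<lambda>b. b - 7 * m) ` T) = card T"
    and "j \<in> (\<lambda>b. b - 7 * m) ` T \<longleftrightarrow> 7 * m + j \<in> T"
proof -
  have "inj_on (\<lambda>b. b - 7 * m) T"
    using assms by (auto simp: inj_on_def B_def subset_eq) (metis le_add_diff_inverse)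
  then show "card ((\<lambda>b. b - 7 * m) ` T) = card T" by (rule card_image)
  show "(\<lambda>b. b - 7 * m) ` T \<subseteq> {..<7 * m}" using assms by (auto simp: B_def subset_eq)
  show "j \<in> (\<lambda>b. b - 7 * m) ` T \<longleftrightarrow> 7 * m + j \<in> T"
    using assms by (auto simp: B_def subset_eq image_iff) (metis add_diff_cancel_left')
qed

lemma few_left_vertices_expand:
  assumes E: "base_edges \<subseteq> E" and S: "S \<subseteq> A" "1 \<le> card S" "card S \<le> m"
  shows "card S \<le> card {b \<in> B - B'. \<exists>a\<in>S. (a, b) \<in> E}"
proof -
  define C where "C = (\<Union>f\<in>set F. (\<lambda>i. f ! i mod (5 * m)) ` S)"
  have "card S \<le> card C"
    unfolding C_def using S by (intro expanding_family_folds[OF expanding(1)]) (auto simp: A_def)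
  also have "\<dots> = card ((+) (9 * m) ` C)" by (simp add: card_image)
  also have "\<dots> \<le> card {b \<in> B - B'. \<exists>a\<in>S. (a, b) \<in> E}"
  proof (rule card_mono)
    show "finite {b \<in> B - B'. \<exists>a\<in>S. (a, b) \<in> E}" by (simp add: B_def)
    have "(i, 9 * m + f ! i mod (5 * m)) \<in> E" if "i \<in> S" "f \<in> set F" for i f
      using that S(1) E base_edgesI(2) by (auto simp: A_def)
    moreover have "f ! i mod (5 * m) < 5 * m" for f i using m_pos by simp
    ultimately show "(+) (9 * m) ` C \<subseteq> {b \<in> B - B'. \<exists>a\<in>S. (a, b) \<in> E}"
      by (fastforce simp: C_def B_def B'_def)
  qed
  finally show ?thesis .
qed

lemma few_right_vertices_expand:
  assumes E: "base_edges \<subseteq> E" and T: "T \<subseteq> B" "1 \<le> card T" "card T \<le> m"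
  shows "card T \<le> card {a \<in> A - A'. \<exists>b\<in>T. (a, b) \<in> E}"
proof -
  define J where "J = (\<lambda>b. b - 7 * m) ` T"
  define C where "C = (\<Union>g\<in>set G. (\<lambda>j. g ! j mod (5 * m)) ` J)"
  have "card T = card J" using shift_of_subset_B(2)[OF T(1)] by (simp add: J_def)
  also have "\<dots> \<le> card C"
    unfolding C_def J_def using T shift_of_subset_B(1,2)[OF T(1)]
    by (intro expanding_family_folds[OF expanding(2)]) auto
  also have "\<dots> = card ((+) (2 * m) ` C)" by (simp add: card_image)
  also have "\<dots> \<le> card {a \<in> A - A'. \<exists>b\<in>T. (a, b) \<in> E}"
  proof (rule card_mono)
    show "finite {a \<in> A - A'. \<exists>b\<in>T. (a, b) \<in> E}" by (simp add: A_def)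
    have "(2 * m + g ! j mod (5 * m), 7 * m + j) \<in> E \<and> 7 * m + j \<in> T" if "j \<in> J" "g \<in> set G" for j g
    proof -
      have "j < 7 * m" using that(1) shift_of_subset_B(1)[OF T(1)] by (auto simp: J_def)
      then show ?thesis
        using that E base_edgesI(3) shift_of_subset_B(3)[OF T(1)] by (auto simp: J_def)
    qed
    moreover have "g ! j mod (5 * m) < 5 * m" for g j using m_pos by simp
    ultimately show "(+) (2 * m) ` C \<subseteq> {a \<in> A - A'. \<exists>b\<in>T. (a, b) \<in> E}"
      by (fastforce simp: C_def A_def A'_def)
  qed
  finally show ?thesis .
qed

lemma large_sides_adjacent:
  assumes E: "base_edges \<subseteq> E" and S: "S \<subseteq> A" and T: "T \<subseteq> B"
    and "m \<le> card S" "m \<le> card T" "6 * m + 1 \<le> card S + card T"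
  shows "\<exists>a\<in>S. \<exists>b\<in>T. (a, b) \<in> E"
proof -
  define J where "J = (\<lambda>b. b - 7 * m) ` T"
  have "J \<subseteq> {..<7 * m}" "card J = card T" "\<And>j. j \<in> J \<longleftrightarrow> 7 * m + j \<in> T"
    using shift_of_subset_B[OF T] by (simp_all add: J_def)
  then obtain p i where "p \<in> set P" "i \<in> S" "7 * m + p ! i \<in> T"
    using connecting S assms(4-6) unfolding connecting_family_def A_def by metis
  moreover have "(i, 7 * m + p ! i) \<in> E"
    using \<open>p \<in> set P\<close> \<open>i \<in> S\<close> S E base_edgesI(1) by (auto simp: A_def)
  ultimately show ?thesis by blast
qed

lemma card_A_Diff:
  assumes "X \<subseteq> A'"
  shows "card (A - X) = 7 * m - card X"
proof -
  have "X \<subseteq> A" using assms by (auto simp: A_def A'_def)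
  moreover have "finite X" using calculation by (rule finite_subset) (simp add: A_def)
  ultimately show ?thesis by (simp add: card_Diff_subset A_def)
qed

lemma card_B_Diff:
  assumes "Y \<subseteq> B'"
  shows "card (B - Y) = 7 * m - card Y"
proof -
  have "Y \<subseteq> B" using assms by (auto simp: B_def B'_def)
  moreover have "finite Y" using calculation by (rule finite_subset) (simp add: B_def)
  ultimately show ?thesis by (simp add: card_Diff_subset B_def)
qed

text \<open>A small S or T has many neighbours in a core, which avoids the deleted vertices; if both
  are large, the connecting family joins them.\<close>

lemma nonadjacent_sets_card_le:
  assumes E: "base_edges \<subseteq> E" and X: "X \<subseteq> A'" and Y: "Y \<subseteq> B'"
    and XY: "card X = card Y" "card X \<le> m"
    and S: "S \<subseteq> A - X" and T: "T \<subseteq> B - Y" and no_edge: "\<forall>a\<in>S. \<forall>b\<in>T. (a, b) \<notin> E"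
  shows "card S + card T \<le> 7 * m - card X"
proof -
  have finS: "finite S" using S by (rule finite_subset) (simp add: A_def)
  have finT: "finite T" using T by (rule finite_subset) (simp add: B_def)
  have cS: "card S + card ((A - X) - S) = 7 * m - card X"
    using card_Diff_subset[OF finS S] card_mono[OF _ S] card_A_Diff[OF X] by (simp add: A_def)
  have cT: "card T + card ((B - Y) - T) = 7 * m - card X"
    using card_Diff_subset[OF finT T] card_mono[OF _ T] card_B_Diff[OF Y] XY(1) by (simp add: B_def)
  consider (small_S) "card S \<le> m" | (small_T) "card T \<le> m" | (large) "m < card S" "m < card T"
    by linarith
  then show ?thesis
  proof cases
    case small_S
    show ?thesis
    proof (cases "S = {}")
      case False
      then have "1 \<le> card S" using finS by (simp add: Suc_le_eq card_gt_0_iff)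
      have "card S \<le> card {b \<in> B - B'. \<exists>a\<in>S. (a, b) \<in> E}"
        using S by (intro few_left_vertices_expand[OF E _ \<open>1 \<le> card S\<close> small_S]) auto
      also have "\<dots> \<le> card ((B - Y) - T)"
        using Y no_edge by (intro card_mono) (auto simp: B_def)
      finally show ?thesis using cT by linarith
    qed (use cT in simp)
  next
    case small_T
    show ?thesis
    proof (cases "T = {}")
      case False
      then have "1 \<le> card T" using finT by (simp add: Suc_le_eq card_gt_0_iff)
      have "card T \<le> card {a \<in> A - A'. \<exists>b\<in>T. (a, b) \<in> E}"
        using T by (intro few_right_vertices_expand[OF E _ \<open>1 \<le> card T\<close> small_T]) auto
      also have "\<dots> \<le> card ((A - X) - S)"
        using X no_edge by (intro card_mono) (auto simp: A_def)
      finally show ?thesis using cS by linarith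
    qed (use cS in simp)
  next
    case large
    show ?thesis
    proof (rule ccontr)
      assume "\<not> ?thesis"
      then have "6 * m + 1 \<le> card S + card T" using XY by linarith
      moreover have "S \<subseteq> A" "T \<subseteq> B" using S T by auto
      ultimately have "\<exists>a\<in>S. \<exists>b\<in>T. (a, b) \<in> E"
        using large by (intro large_sides_adjacent[OF E]) simp_all
      with no_edge show False by blast
    qed
  qed
qed

lemma hall_condition_after_deletion:
  assumes E: "base_edges \<subseteq> E" and X: "X \<subseteq> A'" and Y: "Y \<subseteq> B'"
    and XY: "card X = card Y" "card X \<le> m" and S: "S \<subseteq> A - X"
  shows "card S \<le> card {b \<in> B - Y. \<exists>a\<in>S. (a, b) \<in> E}"
proof -
  define N where "N = {b \<in> B - Y. \<exists>a\<in>S. (a, b) \<in> E}"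
  have "N \<subseteq> B - Y" "finite N" by (auto simp: N_def B_def)
  then have "card ((B - Y) - N) = 7 * m - card X - card N"
    using card_B_Diff[OF Y] XY(1) by (simp add: card_Diff_subset)
  moreover have "card S + card ((B - Y) - N) \<le> 7 * m - card X"
    by (rule nonadjacent_sets_card_le[OF E X Y XY S]) (auto simp: N_def)
  moreover have "card N \<le> 7 * m - card X"
    using card_mono[OF _ \<open>N \<subseteq> B - Y\<close>] card_B_Diff[OF Y] XY(1) by (simp add: B_def)
  ultimately show ?thesis by (simp add: N_def)
qed

lemma perfect_matching_after_deletion:
  assumes "base_edges \<subseteq> E" "X \<subseteq> A'" "Y \<subseteq> B'" "card X = card Y" "card X \<le> m"
  shows "bip_has_perfect_matching (A - X) (B - Y) E"
proof (rule perfect_matching_if_hall)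
  show "card (A - X) = card (B - Y)" using card_A_Diff card_B_Diff assms(2-4) by simp
  show "\<forall>S\<subseteq>A - X. card S \<le> card {b \<in> B - Y. \<exists>a\<in>S. (a, b) \<in> E}"
    using hall_condition_after_deletion[OF assms] by blast
qed (simp_all add: A_def B_def)

end

theorem lemma5:
  shows "\<exists>m0::nat. \<forall>m\<ge>m0. \<exists>(A::nat set) B E A' B'.
           bip_graph A B E \<and> bip_regular 256 A B E \<and>
           card A = 7 * m \<and> card B = 7 * m \<and>
           A' \<subseteq> A \<and> B' \<subseteq> B \<and> card A' = 2 * m \<and> card B' = 2 * m \<and>
           (\<forall>X Y. X \<subseteq> A' \<longrightarrow> Y \<subseteq> B' \<longrightarrow> card X = card Y \<longrightarrow> card X \<le> m \<longrightarrow>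
              bip_has_perfect_matching (A - X) (B - Y) E)"
    (is "\<exists>m0. \<forall>m\<ge>m0. ?robust m")
proof (rule exI[of _ 10000], intro allI impI)
  fix m :: nat assume "10000 \<le> m"
  then have "1 \<le> m" by simp
  obtain P F G where "connecting_family m P" "expanding_family m F" "expanding_family m G"
    using connecting_family_exists[OF \<open>1 \<le> m\<close>] expanding_family_exists by blast
  then interpret C: robust_matching_construction m P F G
    using \<open>1 \<le> m\<close> by unfold_locales
  obtain E where E: "C.base_edges \<subseteq> E" "E \<subseteq> C.A \<times> C.B" "bip_regular 256 C.A C.B E"
    using C.regular_extension_exists \<open>10000 \<le> m\<close> by auto
  show "?robust m"
    by (intro exI[of _ C.A] exI[of _ C.B] exI[of _ E] exI[of _ C.A'] exI[of _ C.B'] conjI allI impI)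
      (use E C.perfect_matching_after_deletion[OF E(1)] in
        \<open>auto simp: bip_graph_def C.A_def C.B_def C.A'_def C.B'_def\<close>)
qed

end
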